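(* Let $F$ be an algebraically closed field of positive characteristic $p$. A rational function $\phi \in F(z)$ has no finite critical point if and only if its continued fraction expansion has the form \[ \phi(z) = [q_0(z^p), q_1(z^p), \ldots, q_n(z^p) + az] \] for some integer $n \geq 0$, polynomials $q_0, q_1, \ldots, q_n \in F[z]$, and a nonzero element $a \in F$.
   Context: Continued fraction expansion: for $\phi \in F(z)$, repeated use of the division algorithm gives unique polynomials $f_0, \ldots, f_n \in F[z]$, with $f_1, \ldots, f_n$ nonconstant ($f_0$ may be constant or zero), such that $\phi = f_0 + \cfrac{1}{f_1 + \cfrac{1}{\ddots + \cfrac{1}{f_n}}}$; this is written $\phi = [f_0, f_1, \ldots, f_n]$. Critical points: for $x \in F$, choose a fractional linear transformation $\sigma$ with coefficients in $F$ such that $\sigma(\phi(x)) \neq \infty$; $x$ is a finite critical point of $\phi$ if $\frac{d(\sigma\circ\phi)}{dz}(x) = 0$ (this is independent of the choice of $\sigma$). The point $\infty$ is a critical point if $\frac{d(\sigma \circ \phi(1/z))}{dz}\big|_{z=0} = 0$ for such a $\sigma$ with $\sigma(\phi(\infty)) \neq \infty$. *)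

theory Defs
  imports "HOL-Computational_Algebra.Computational_Algebra"
begin

text \<open>Rational functions in F(z) are elements of the fraction field of F[z].
  Numerator/denominator are taken in reduced (normalized) form.\<close>

definition rnum :: "'a::field_gcd poly fract \<Rightarrow> 'a poly" where
  "rnum \<phi> = fst (quot_of_fract \<phi>)"

definition rden :: "'a::field_gcd poly fract \<Rightarrow> 'a poly" where
  "rden \<phi> = snd (quot_of_fract \<phi>)"

text \<open>Value of a rational function at a point of F, as an element of the
  projective line F \<union> {\<infinity>}; None stands for \<infinity>.\<close>
definition rval :: "'a::field_gcd poly fract \<Rightarrow> 'a \<Rightarrow> 'a option" where
  "rval \<phi> x = (if poly (rden \<phi>) x \<noteq> 0
                then Some (poly (rnum \<phi>) x / poly (rden \<phi>) x) else None)"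

definition rderiv :: "'a::field_gcd poly fract \<Rightarrow> 'a poly fract" where
  "rderiv \<phi> = Fract (pderiv (rnum \<phi>) * rden \<phi> - rnum \<phi> * pderiv (rden \<phi>))
                      (rden \<phi> ^ 2)"

definition flt_ok :: "'a::field_gcd \<Rightarrow> 'a \<Rightarrow> 'a \<Rightarrow> 'a \<Rightarrow> bool" where
  "flt_ok a b c d \<longleftrightarrow> a * d - b * c \<noteq> 0"

definition flt_apply :: "'a::field_gcd \<Rightarrow> 'a \<Rightarrow> 'a \<Rightarrow> 'a \<Rightarrow> 'a option \<Rightarrow> 'a option" where
  "flt_apply a b c d w = (case w of
      Some v \<Rightarrow> (if c * v + d \<noteq> 0 then Some ((a * v + b) / (c * v + d)) else None)
    | None \<Rightarrow> (if c \<noteq> 0 then Some (a / c) else None))"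

definition flt_comp :: "'a::field_gcd \<Rightarrow> 'a \<Rightarrow> 'a \<Rightarrow> 'a \<Rightarrow> 'a poly fract \<Rightarrow> 'a poly fract" where
  "flt_comp a b c d \<phi> =
     (to_fract [:a:] * \<phi> + to_fract [:b:]) / (to_fract [:c:] * \<phi> + to_fract [:d:])"

text \<open>x \<in> F is a finite critical point of \<phi>: for a fractional linear
  transformation \<sigma> with \<sigma>(\<phi>(x)) \<noteq> \<infinity>, the derivative of \<sigma> \<circ> \<phi> vanishes at x
  (independent of the choice of \<sigma>).\<close>
definition finite_critical_point :: "'a::field_gcd poly fract \<Rightarrow> 'a \<Rightarrow> bool" where
  "finite_critical_point \<phi> x \<longleftrightarrow>
     (\<exists>a b c d. flt_ok a b c d \<and> flt_apply a b c d (rval \<phi> x) \<noteq> None \<and>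
        rval (rderiv (flt_comp a b c d \<phi>)) x = Some 0)"

fun cfrac :: "'a::field_gcd poly list \<Rightarrow> 'a poly fract" where
  "cfrac [] = 0"
| "cfrac [f] = to_fract f"
| "cfrac (f # fs) = to_fract f + inverse (cfrac fs)"

text \<open>fs is a continued fraction expansion of \<phi>: nonempty, all entries after
  the first nonconstant, and it evaluates to \<phi> (such an expansion is unique).\<close>
definition is_cf_expansion :: "'a::field_gcd poly fract \<Rightarrow> 'a poly list \<Rightarrow> bool" where
  "is_cf_expansion \<phi> fs \<longleftrightarrow>
     fs \<noteq> [] \<and> (\<forall>i\<in>{1..<length fs}. degree (fs ! i) \<ge> 1) \<and> cfrac fs = \<phi>"

end

theory Submission
  imports Defs
begin

text \<open>Write \<phi> = f/g in lowest terms. By the quotient rule the derivative of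
  \<sigma> \<circ> \<phi> is (ad - bc) W(f,g) / (cf + dg)^2, where W(f,g) = f'g - fg' is the
  Wronskian, so the finite critical points of \<phi> are exactly the roots of W(f,g);
  over an algebraically closed field, \<phi> has none iff W(f,g) is a nonzero constant.
  The Wronskian is invariant up to sign under a step f = s g + r of the Euclidean
  algorithm, W(f,g) = s' g^2 - W(g,r), and comparing degrees shows that s' = 0
  whenever W(f,g) is constant. In characteristic p the polynomials with vanishing
  derivative are exactly those in z^p, and the Euclidean algorithm stops at a
  constant divisor c, where f/c has constant nonzero derivative a, i.e.
  f/c = q(z^p) + az. Conversely, such continued fractions have constant
  nonzero Wronskian by the same recursion.\<close>

definition wronskian :: "'a::idom poly \<Rightarrow> 'a poly \<Rightarrow> 'a poly" where
  "wronskian f g = pderiv f * g - f * pderiv g"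

lemma wronskian_const_right: "wronskian f [:c:] = smult c (pderiv f)"
  by (simp add: wronskian_def)

lemma wronskian_linear_combination:
  "wronskian (smult a f + smult b g) (smult c f + smult d g) = smult (a * d - b * c) (wronskian f g)"
  by (simp add: wronskian_def pderiv_add pderiv_smult algebra_simps smult_diff_left smult_diff_right)

lemma wronskian_mult_add:
  "wronskian (s * g + r) g = pderiv s * g ^ 2 - wronskian g r"
  by (simp add: wronskian_def pderiv_add pderiv_mult power2_eq_square algebra_simps)

lemma wronskian_cross_mult:
  assumes "f * G = F * g"
  shows "wronskian f g * G ^ 2 = wronskian F G * g ^ 2"
proof -
  have deriv: "pderiv f * G + f * pderiv G = pderiv F * g + F * pderiv g"
    using arg_cong[OF assms, of pderiv] by (simp add: pderiv_mult mult.commute)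
  have "wronskian f g * G ^ 2 - wronskian F G * g ^ 2
      = (g * G) * (pderiv f * G + f * pderiv G - (pderiv F * g + F * pderiv g))
        - (g * pderiv G + pderiv g * G) * (f * G - F * g)"
    by (simp add: wronskian_def power2_eq_square algebra_simps)
  also have "\<dots> = 0"
    using assms deriv by simp
  finally show ?thesis
    by simp
qed

lemma is_unit_wronskian_imp_nonzero:
  assumes "is_unit (wronskian f g)"
  shows "f \<noteq> 0" "g \<noteq> 0"
  using assms by (auto simp: wronskian_def)

lemma degree_pderiv_le: "degree (pderiv f) \<le> degree f"
  by (rule degree_le) (simp add: coeff_pderiv coeff_eq_0)

lemma degree_wronskian_less:
  assumes "degree r < degree g"
  shows "degree (wronskian g r) < 2 * degree g"
proof -
  have "degree (pderiv g * r) < 2 * degree g"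
    using degree_mult_le[of "pderiv g" r] degree_pderiv_le[of g] assms by linarith
  moreover have "degree (g * pderiv r) < 2 * degree g"
    using degree_mult_le[of g "pderiv r"] degree_pderiv_le[of r] assms by linarith
  ultimately show ?thesis
    unfolding wronskian_def using degree_diff_le_max[of "pderiv g * r" "g * pderiv r"] by linarith
qed

lemma is_unit_wronskian_imp_pderiv_div_eq_0:
  fixes f g :: "'a::field poly"
  assumes unit: "is_unit (wronskian f g)" and deg: "degree g > 0"
  shows "pderiv (f div g) = 0"
proof (rule ccontr)
  assume nz: "pderiv (f div g) \<noteq> 0"
  have "g \<noteq> 0"
    using deg by auto
  have "degree (f mod g) < degree g"
    using degree_mod_less[OF \<open>g \<noteq> 0\<close>, of f] deg by auto
  then have small: "degree (wronskian g (f mod g)) < 2 * degree g"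
    by (rule degree_wronskian_less)
  have "pderiv (f div g) * g ^ 2 = wronskian f g + wronskian g (f mod g)"
    using wronskian_mult_add[of "f div g" g "f mod g"] by simp
  moreover have "degree (wronskian f g) = 0"
    using unit by (metis is_unit_iff_degree not_is_unit_0)
  ultimately have "degree (pderiv (f div g) * g ^ 2) < 2 * degree g"
    using degree_add_le_max[of "wronskian f g" "wronskian g (f mod g)"] small deg by simp
  moreover have "degree (pderiv (f div g) * g ^ 2) \<ge> 2 * degree g"
    using nz \<open>g \<noteq> 0\<close> by (simp add: degree_mult_eq degree_power_eq)
  ultimately show False
    by simp
qed

lemma Fract_rnum_rden [simp]: "Fract (rnum \<phi>) (rden \<phi>) = \<phi>"
  by (simp add: rnum_def rden_def)

lemma rden_nonzero [simp]: "rden \<phi> \<noteq> 0"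
  by (simp add: rden_def)

lemma coprime_rnum_rden: "coprime (rnum \<phi>) (rden \<phi>)"
  using coprime_quot_of_fract[of \<phi>] by (simp add: rnum_def rden_def)

lemma rnum_rden_Fract_cross:
  assumes "g \<noteq> 0"
  shows "rnum (Fract f g) * g = f * rden (Fract f g)"
proof -
  have "Fract (rnum (Fract f g)) (rden (Fract f g)) = Fract f g"
    by simp
  then show ?thesis
    using eq_fract(1)[OF rden_nonzero assms] by blast
qed

lemma rden_Fract_dvd:
  assumes "g \<noteq> 0"
  shows "rden (Fract f g) dvd g"
proof -
  have "rden (Fract f g) dvd rnum (Fract f g) * g"
    using rnum_rden_Fract_cross[OF assms] by simp
  then show ?thesis
    using coprime_rnum_rden[of "Fract f g"] coprime_dvd_mult_right_iff coprime_commute by blast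
qed

lemma rval_Fract:
  assumes "poly g x \<noteq> 0"
  shows "rval (Fract f g) x = Some (poly f x / poly g x)"
proof -
  have "g \<noteq> 0"
    using assms by auto
  have "poly (rden (Fract f g)) x \<noteq> 0"
    using rden_Fract_dvd[OF \<open>g \<noteq> 0\<close>] assms by (metis dvd_def mult_zero_left poly_mult)
  moreover have "poly (rnum (Fract f g)) x * poly g x = poly f x * poly (rden (Fract f g)) x"
    using arg_cong[OF rnum_rden_Fract_cross[OF \<open>g \<noteq> 0\<close>], of "\<lambda>h. poly h x"] by simp
  ultimately show ?thesis
    using assms unfolding rval_def by (simp add: field_simps)
qed

lemma rderiv_Fract:
  assumes "g \<noteq> 0"
  shows "rderiv (Fract f g) = Fract (wronskian f g) (g ^ 2)"
  using wronskian_cross_mult[OF rnum_rden_Fract_cross[OF assms]] assms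
  by (simp add: rderiv_def eq_fract wronskian_def[symmetric])

lemma flt_comp_Fract:
  assumes "g \<noteq> 0"
  shows "flt_comp a b c d (Fract f g) = Fract (smult a f + smult b g) (smult c f + smult d g)"
proof -
  have num: "to_fract [:a:] * Fract f g + to_fract [:b:] = Fract (smult a f + smult b g) g"
    and den: "to_fract [:c:] * Fract f g + to_fract [:d:] = Fract (smult c f + smult d g) g"
    using assms by (simp_all add: to_fract_def eq_fract algebra_simps)
  show ?thesis
  proof (cases "smult c f + smult d g = 0")
    case True
    then show ?thesis
      unfolding flt_comp_def num den by (simp add: eq_fract Zero_fract_def)
  next
    case False
    have "smult c (f * g) + smult d (g * g) = (smult c f + smult d g) * g"
      by (simp add: algebra_simps)
    then have "smult c (f * g) + smult d (g * g) \<noteq> 0"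
      using False assms by simp
    then show ?thesis
      using False assms unfolding flt_comp_def num den by (simp add: eq_fract algebra_simps)
  qed
qed

lemma flt_apply_rval_eq_None_iff:
  "flt_apply a b c d (rval \<phi> x) = None \<longleftrightarrow> c * poly (rnum \<phi>) x + d * poly (rden \<phi>) x = 0"
proof (cases "poly (rden \<phi>) x = 0")
  case True
  then have "poly (rnum \<phi>) x \<noteq> 0"
    using coprime_poly_0[OF coprime_rnum_rden] by blast
  with True show ?thesis
    by (simp add: rval_def flt_apply_def)
next
  case False
  then have "flt_apply a b c d (rval \<phi> x) = None
      \<longleftrightarrow> c * (poly (rnum \<phi>) x / poly (rden \<phi>) x) + d = 0"
    by (simp add: rval_def flt_apply_def)
  also have "\<dots> \<longleftrightarrow> c * poly (rnum \<phi>) x + d * poly (rden \<phi>) x = 0"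
    using False by (metis divide_add_eq_iff divide_eq_0_iff times_divide_eq_right)
  finally show ?thesis .
qed

lemma rval_rderiv_flt_comp:
  assumes "poly (smult c (rnum \<phi>) + smult d (rden \<phi>)) x \<noteq> 0"
  shows "rval (rderiv (flt_comp a b c d \<phi>)) x
    = Some ((a * d - b * c) * poly (wronskian (rnum \<phi>) (rden \<phi>)) x
            / poly (smult c (rnum \<phi>) + smult d (rden \<phi>)) x ^ 2)"
proof -
  let ?D = "smult c (rnum \<phi>) + smult d (rden \<phi>)"
  have "?D \<noteq> 0"
    using assms by (metis poly_0)
  have "flt_comp a b c d \<phi> = Fract (smult a (rnum \<phi>) + smult b (rden \<phi>)) ?D"
    using flt_comp_Fract[OF rden_nonzero[of \<phi>], of a b c d "rnum \<phi>"] by simp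
  then have "rderiv (flt_comp a b c d \<phi>)
      = Fract (smult (a * d - b * c) (wronskian (rnum \<phi>) (rden \<phi>))) (?D ^ 2)"
    using \<open>?D \<noteq> 0\<close> by (simp add: rderiv_Fract wronskian_linear_combination)
  then show ?thesis
    using assms by (simp add: rval_Fract poly_power)
qed

lemma finite_critical_point_iff_wronskian_root:
  "finite_critical_point \<phi> x \<longleftrightarrow> poly (wronskian (rnum \<phi>) (rden \<phi>)) x = 0"
proof
  assume "finite_critical_point \<phi> x"
  then obtain a b c d where "flt_ok a b c d" and "flt_apply a b c d (rval \<phi> x) \<noteq> None"
    and "rval (rderiv (flt_comp a b c d \<phi>)) x = Some 0"
    unfolding finite_critical_point_def by blast
  then show "poly (wronskian (rnum \<phi>) (rden \<phi>)) x = 0"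
    by (simp add: flt_apply_rval_eq_None_iff rval_rderiv_flt_comp flt_ok_def)
next
  assume root: "poly (wronskian (rnum \<phi>) (rden \<phi>)) x = 0"
  have "\<exists>a b c d. flt_ok a b c d \<and> poly (smult c (rnum \<phi>) + smult d (rden \<phi>)) x \<noteq> 0"
  proof (cases "poly (rden \<phi>) x = 0")
    case True
    then have "poly (rnum \<phi>) x \<noteq> 0"
      using coprime_poly_0[OF coprime_rnum_rden] by blast
    then show ?thesis
      by (intro exI[of _ 0] exI[of _ 1] exI[of _ 1] exI[of _ 0]) (simp add: flt_ok_def)
  next
    case False
    then show ?thesis
      by (intro exI[of _ 1] exI[of _ 0] exI[of _ 0] exI[of _ 1]) (simp add: flt_ok_def)
  qed
  then obtain a b c d
    where "flt_ok a b c d" and den: "poly (smult c (rnum \<phi>) + smult d (rden \<phi>)) x \<noteq> 0"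
    by blast
  moreover have "rval (rderiv (flt_comp a b c d \<phi>)) x = Some 0"
    using root by (simp add: rval_rderiv_flt_comp[OF den])
  ultimately show "finite_critical_point \<phi> x"
    unfolding finite_critical_point_def by (auto simp: flt_apply_rval_eq_None_iff)
qed

lemma no_root_iff_is_unit:
  fixes w :: "'a::field poly"
  assumes alg_closed: "\<And>f :: 'a poly. degree f \<ge> 1 \<Longrightarrow> \<exists>x. poly f x = 0"
  shows "(\<nexists>x. poly w x = 0) \<longleftrightarrow> is_unit w"
proof
  assume no_root: "\<nexists>x. poly w x = 0"
  then have "w \<noteq> 0" and "degree w = 0"
    using alg_closed[of w] by fastforce+
  then show "is_unit w"
    by (simp add: is_unit_iff_degree)
next
  assume "is_unit w"
  then show "\<nexists>x. poly w x = 0"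
    by (auto simp: is_unit_poly_iff)
qed

lemma no_finite_critical_point_iff_is_unit_wronskian:
  fixes \<phi> :: "'a::field_gcd poly fract"
  assumes "\<And>f :: 'a poly. degree f \<ge> 1 \<Longrightarrow> \<exists>x. poly f x = 0"
  shows "(\<nexists>x. finite_critical_point \<phi> x) \<longleftrightarrow> is_unit (wronskian (rnum \<phi>) (rden \<phi>))"
  unfolding finite_critical_point_iff_wronskian_root by (rule no_root_iff_is_unit[OF assms])

lemma pcompose_monom: "pcompose (monom c n) r = smult c (r ^ n)"
  by (induction n) (simp_all add: monom_Suc pcompose_pCons monom_0)

lemma pderiv_pcompose_monom_CHAR [simp]:
  "pderiv (pcompose q (monom 1 CHAR('a))) = (0 :: 'a::idom poly)"
  by (simp add: pderiv_pcompose pderiv_monom)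

lemma pderiv_eq_0_imp_pcompose_monom_CHAR:
  fixes f :: "'a::field poly"
  assumes "pderiv f = 0" and "CHAR('a) > 0"
  obtains q where "f = pcompose q (monom 1 CHAR('a))"
proof -
  let ?p = "CHAR('a)"
  have coeff_0: "coeff f j = 0" if "\<not> ?p dvd j" for j
  proof -
    have "j \<noteq> 0"
      using that by (metis dvd_0_right)
    then have "of_nat j * coeff f j = 0"
      using arg_cong[OF assms(1), of "\<lambda>h. coeff h (j - 1)"] by (cases j) (simp_all add: coeff_pderiv)
    moreover have "(of_nat j :: 'a) \<noteq> 0"
      using that by (simp add: of_nat_eq_0_iff_char_dvd)
    ultimately show ?thesis
      by simp
  qed
  let ?q = "\<Sum>i\<le>degree f. monom (coeff f (i * ?p)) i"
  have "pcompose ?q (monom 1 ?p) = (\<Sum>i\<le>degree f. monom (coeff f (i * ?p)) (i * ?p))"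
    by (simp add: pcompose_sum pcompose_monom monom_power smult_monom mult.commute)
  also have "\<dots> = f"
  proof (rule poly_eqI)
    fix j
    show "coeff (\<Sum>i\<le>degree f. monom (coeff f (i * ?p)) (i * ?p)) j = coeff f j"
    proof (cases "?p dvd j")
      case True
      then obtain m where j: "j = m * ?p"
        by (metis dvd_def mult.commute)
      have "m \<le> j"
        using j assms(2) by simp
      then have "coeff (\<Sum>i\<le>degree f. monom (coeff f (i * ?p)) (i * ?p)) j
          = (if m \<le> degree f then coeff f j else 0)"
        unfolding coeff_sum j using assms(2) by (simp add: sum.delta')
      also have "\<dots> = coeff f j"
        using \<open>m \<le> j\<close> by (auto simp: coeff_eq_0)
      finally show ?thesis .
    next
      case False
      then show ?thesis
        unfolding coeff_sum using coeff_0 by (auto intro!: sum.neutral)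
    qed
  qed
  finally show thesis
    using that by metis
qed

lemma is_unit_pderiv_imp_pcompose_monom_CHAR_plus_linear:
  fixes f :: "'a::field poly"
  assumes "is_unit (pderiv f)" and "CHAR('a) > 0"
  obtains q a where "a \<noteq> 0" and "f = pcompose q (monom 1 CHAR('a)) + [:0, a:]"
proof -
  obtain a where a: "pderiv f = [:a:]" and "a dvd 1"
    using assms(1) is_unit_poly_iff by blast
  then have "a \<noteq> 0"
    by auto
  have "pderiv (f - [:0, a:]) = 0"
    using a by (simp add: pderiv_diff pderiv_pCons)
  then obtain q where "f - [:0, a:] = pcompose q (monom 1 CHAR('a))"
    using assms(2) by (rule pderiv_eq_0_imp_pcompose_monom_CHAR)
  then have "f = pcompose q (monom 1 CHAR('a)) + [:0, a:]"
    by (simp add: diff_eq_eq)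
  with \<open>a \<noteq> 0\<close> show thesis
    by (rule that)
qed

lemma is_unit_wronskian_rnum_rden:
  assumes "is_unit (wronskian f g)"
  shows "is_unit (wronskian (rnum (Fract f g)) (rden (Fract f g)))"
proof -
  let ?f = "rnum (Fract f g)" and ?g = "rden (Fract f g)"
  have "g \<noteq> 0"
    using assms by (rule is_unit_wronskian_imp_nonzero)
  then obtain h where h: "g = ?g * h"
    using rden_Fract_dvd by blast
  have "wronskian ?f ?g * g ^ 2 = wronskian f g * ?g ^ 2"
    using wronskian_cross_mult[OF rnum_rden_Fract_cross[OF \<open>g \<noteq> 0\<close>]] .
  moreover have "g ^ 2 = h ^ 2 * ?g ^ 2"
    using h by (metis power_mult_distrib mult.commute)
  ultimately have "(wronskian ?f ?g * h ^ 2) * ?g ^ 2 = wronskian f g * ?g ^ 2"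
    by (simp add: mult.assoc)
  then have "is_unit (wronskian ?f ?g * h ^ 2)"
    using assms by simp
  then show ?thesis
    by (simp add: is_unit_mult_iff)
qed

lemma degree_div_pos:
  fixes f g :: "'a::field poly"
  assumes "g \<noteq> 0" and "degree g < degree f"
  shows "degree (f div g) \<ge> 1"
proof (rule ccontr)
  assume "\<not> degree (f div g) \<ge> 1"
  then have "degree (f div g * g) \<le> degree g"
    using degree_mult_le[of "f div g" g] by linarith
  moreover have "degree (f mod g) \<le> degree g"
    using degree_mod_less[OF assms(1), of f] by auto
  ultimately have "degree f \<le> degree g"
    using degree_add_le[of "f div g * g" "degree g" "f mod g"] by simp
  with assms(2) show False
    by simp
qed

lemma cfrac_Cons:
  assumes "fs \<noteq> []"
  shows "cfrac (f # fs) = to_fract f + inverse (cfrac fs)"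
  using assms by (cases fs) simp_all

lemma is_cf_expansion_Cons:
  assumes "is_cf_expansion \<psi> fs" and "degree (hd fs) \<ge> 1"
  shows "is_cf_expansion (to_fract f + inverse \<psi>) (f # fs)"
proof -
  have "fs \<noteq> []" and degs: "\<forall>i\<in>{1..<length fs}. degree (fs ! i) \<ge> 1"
    using assms(1) by (simp_all add: is_cf_expansion_def)
  have "degree ((f # fs) ! i) \<ge> 1" if "i \<in> {1..<length (f # fs)}" for i
  proof (cases "i = 1")
    case True
    then show ?thesis
      using assms(2) \<open>fs \<noteq> []\<close> by (simp add: hd_conv_nth)
  next
    case False
    then have "i - 1 \<in> {1..<length fs}"
      using that by auto
    then show ?thesis
      using degs that by (simp add: nth_Cons')
  qed
  then show ?thesis
    using assms(1) \<open>fs \<noteq> []\<close> by (simp add: is_cf_expansion_def cfrac_Cons)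
qed

definition cf_pform :: "nat \<Rightarrow> nat \<Rightarrow> 'a::field_gcd poly list \<Rightarrow> 'a \<Rightarrow> 'a poly list" where
  "cf_pform p n qs a = map (\<lambda>i. if i = n then pcompose (qs ! i) (monom 1 p) + [:0, a:]
                                  else pcompose (qs ! i) (monom 1 p)) [0..<n + 1]"

lemma cf_pform_0: "cf_pform p 0 qs a = [pcompose (qs ! 0) (monom 1 p) + [:0, a:]]"
  by (simp add: cf_pform_def)

lemma cf_pform_Suc: "cf_pform p (Suc n) (q # qs) a = pcompose q (monom 1 p) # cf_pform p n qs a"
  unfolding cf_pform_def Suc_eq_plus1[symmetric] map_upt_Suc by simp

lemma cf_pform_neq_Nil: "cf_pform p n qs a \<noteq> []"
  by (simp add: cf_pform_def)

lemma cfrac_cf_pform_eq_Fract: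
  fixes qs :: "'a::field_gcd poly list"
  assumes "length qs = n + 1" and "a \<noteq> 0"
  shows "\<exists>f g. cfrac (cf_pform CHAR('a) n qs a) = Fract f g \<and> is_unit (wronskian f g)"
  using assms(1)
proof (induction n arbitrary: qs)
  case 0
  then obtain q where "qs = [q]"
    by (cases qs) auto
  let ?f = "pcompose q (monom 1 CHAR('a)) + [:0, a:]"
  have "is_unit (wronskian ?f 1)"
    using assms(2)
    by (simp add: wronskian_def pderiv_add pderiv_pCons is_unit_const_poly_iff dvd_field_iff)
  moreover have "cfrac (cf_pform CHAR('a) 0 qs a) = Fract ?f 1"
    by (simp add: \<open>qs = [q]\<close> cf_pform_0 to_fract_def)
  ultimately show ?case
    by blast
next
  case (Suc n)
  then obtain q qs' where qs: "qs = q # qs'" and "length qs' = n + 1"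
    by (cases qs) auto
  then obtain f g where cf: "cfrac (cf_pform CHAR('a) n qs' a) = Fract f g"
    and unit: "is_unit (wronskian f g)"
    using Suc.IH by blast
  let ?s = "pcompose q (monom 1 CHAR('a))"
  have "f \<noteq> 0" "g \<noteq> 0"
    using unit by (rule is_unit_wronskian_imp_nonzero)+
  then have "cfrac (cf_pform CHAR('a) (Suc n) qs a) = Fract (?s * f + g) f"
    by (simp add: qs cf_pform_Suc cfrac_Cons cf_pform_neq_Nil cf to_fract_def)
  moreover have "is_unit (wronskian (?s * f + g) f)"
    using unit by (simp add: wronskian_mult_add)
  ultimately show ?case
    by blast
qed

lemma is_unit_wronskian_div_mod:
  fixes f g :: "'a::field poly"
  assumes unit: "is_unit (wronskian f g)" and "degree g > 0" and "CHAR('a) > 0"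
  obtains q where "f div g = pcompose q (monom 1 CHAR('a))"
    and "is_unit (wronskian g (f mod g))" and "degree (f mod g) < degree g"
proof -
  have "pderiv (f div g) = 0"
    using unit assms(2) by (rule is_unit_wronskian_imp_pderiv_div_eq_0)
  then obtain q where q: "f div g = pcompose q (monom 1 CHAR('a))"
    using assms(3) by (rule pderiv_eq_0_imp_pcompose_monom_CHAR)
  have "wronskian g (f mod g) = - wronskian f g"
    using wronskian_mult_add[of "f div g" g "f mod g"] \<open>pderiv (f div g) = 0\<close> by simp
  then have unit': "is_unit (wronskian g (f mod g))"
    using unit by simp
  then have "f mod g \<noteq> 0"
    by (rule is_unit_wronskian_imp_nonzero)
  then have "degree (f mod g) < degree g"
    using degree_mod_less[of g f] assms(2) by (metis degree_0 less_irrefl)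
  with q unit' show thesis
    by (rule that)
qed

lemma is_unit_wronskian_const_imp_cf_pform_expansion:
  fixes f :: "'a::field_gcd poly"
  assumes unit: "is_unit (wronskian f [:c:])" and "CHAR('a) > 0"
  obtains q a where "a \<noteq> 0" and "is_cf_expansion (Fract f [:c:]) (cf_pform CHAR('a) 0 [q] a)"
    and "degree (hd (cf_pform CHAR('a) 0 [q] a)) = degree f"
proof -
  have "c \<noteq> 0"
    using is_unit_wronskian_imp_nonzero(2)[OF unit] by simp
  let ?f = "smult (inverse c) f"
  have "is_unit (pderiv ?f)"
    using unit \<open>c \<noteq> 0\<close>
    by (simp add: wronskian_const_right pderiv_smult is_unit_smult_iff dvd_field_iff)
  then obtain q a where "a \<noteq> 0" and q: "?f = pcompose q (monom 1 CHAR('a)) + [:0, a:]"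
    using is_unit_pderiv_imp_pcompose_monom_CHAR_plus_linear assms(2) by blast
  have "cfrac [?f] = Fract f [:c:]"
    using \<open>c \<noteq> 0\<close> by (simp add: to_fract_def eq_fract)
  then have "is_cf_expansion (Fract f [:c:]) (cf_pform CHAR('a) 0 [q] a)"
    by (simp add: is_cf_expansion_def cf_pform_0 q[symmetric])
  moreover have "degree (hd (cf_pform CHAR('a) 0 [q] a)) = degree f"
    using \<open>c \<noteq> 0\<close> by (simp add: cf_pform_0 q[symmetric])
  ultimately show thesis
    using \<open>a \<noteq> 0\<close> that by blast
qed

lemma is_unit_wronskian_imp_cf_pform_expansion:
  fixes f g :: "'a::field_gcd poly"
  assumes "is_unit (wronskian f g)" and char: "CHAR('a) > 0"
  shows "\<exists>n qs a. length qs = n + 1 \<and> a \<noteq> 0 \<and>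
           is_cf_expansion (Fract f g) (cf_pform CHAR('a) n qs a) \<and>
           (degree g < degree f \<longrightarrow> degree (hd (cf_pform CHAR('a) n qs a)) \<ge> 1)"
  using assms(1)
proof (induction "degree g" arbitrary: f g rule: less_induct)
  case less
  show ?case
  proof (cases "degree g = 0")
    case True
    then obtain c where g: "g = [:c:]"
      by (metis degree_0_id)
    obtain q a where "a \<noteq> 0" and "is_cf_expansion (Fract f g) (cf_pform CHAR('a) 0 [q] a)"
      and "degree (hd (cf_pform CHAR('a) 0 [q] a)) = degree f"
      using is_unit_wronskian_const_imp_cf_pform_expansion less.prems char unfolding g by metis
    then show ?thesis
      using True by (intro exI[of _ 0] exI[of _ "[q]"] exI[of _ a]) simp
  next
    case False
    then obtain q where q: "f div g = pcompose q (monom 1 CHAR('a))"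
      and unit: "is_unit (wronskian g (f mod g))" and "degree (f mod g) < degree g"
      using is_unit_wronskian_div_mod less.prems char by blast
    then obtain n qs a where "length qs = n + 1" "a \<noteq> 0"
      and "is_cf_expansion (Fract g (f mod g)) (cf_pform CHAR('a) n qs a)"
      and "degree (hd (cf_pform CHAR('a) n qs a)) \<ge> 1"
      using less.hyps[OF _ unit] by blast
    moreover have "Fract f g = to_fract (f div g) + inverse (Fract g (f mod g))"
      using is_unit_wronskian_imp_nonzero[OF unit]
      by (simp add: to_fract_def eq_fract algebra_simps)
    ultimately have "is_cf_expansion (Fract f g) (cf_pform CHAR('a) (Suc n) (q # qs) a)"
      unfolding cf_pform_Suc q[symmetric] by (metis is_cf_expansion_Cons)
    moreover have "degree g < degree f \<longrightarrow> degree (f div g) \<ge> 1"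
      using degree_div_pos is_unit_wronskian_imp_nonzero(1)[OF unit] by blast
    ultimately show ?thesis
      using \<open>length qs = n + 1\<close> \<open>a \<noteq> 0\<close>
      by (intro exI[of _ "Suc n"] exI[of _ "q # qs"] exI[of _ a]) (simp add: cf_pform_Suc q)
  qed
qed

theorem theorem1p1:
  fixes \<phi> :: "'a::field_gcd poly fract" and p :: nat
  assumes alg_closed: "\<And>f :: 'a poly. degree f \<ge> 1 \<Longrightarrow> \<exists>x. poly f x = 0"
    and char: "CHAR('a) = p" and pos: "p > 0"
  shows "(\<nexists>x. finite_critical_point \<phi> x) \<longleftrightarrow>
         (\<exists>n (qs :: 'a poly list) a. length qs = n + 1 \<and> a \<noteq> 0 \<and>
            is_cf_expansion \<phi>
              (map (\<lambda>i. if i = n then pcompose (qs ! i) (monom 1 p) + [:0, a:]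
                        else pcompose (qs ! i) (monom 1 p)) [0..<n + 1]))"
proof -
  have "(\<nexists>x. finite_critical_point \<phi> x) \<longleftrightarrow> is_unit (wronskian (rnum \<phi>) (rden \<phi>))"
    by (rule no_finite_critical_point_iff_is_unit_wronskian[OF alg_closed])
  also have "\<dots> \<longleftrightarrow> (\<exists>n (qs :: 'a poly list) a. length qs = n + 1 \<and> a \<noteq> 0 \<and>
                        is_cf_expansion \<phi> (cf_pform CHAR('a) n qs a))"
  proof
    assume "is_unit (wronskian (rnum \<phi>) (rden \<phi>))"
    then obtain n qs a where "length qs = n + 1" "a \<noteq> 0"
      and "is_cf_expansion (Fract (rnum \<phi>) (rden \<phi>)) (cf_pform CHAR('a) n qs a)"
      using is_unit_wronskian_imp_cf_pform_expansion char pos by blast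
    then show "\<exists>n qs a. length qs = n + 1 \<and> a \<noteq> 0 \<and> is_cf_expansion \<phi> (cf_pform CHAR('a) n qs a)"
      by auto
  next
    assume "\<exists>n qs a. length qs = n + 1 \<and> a \<noteq> 0 \<and> is_cf_expansion \<phi> (cf_pform CHAR('a) n qs a)"
    then obtain n qs a where "length qs = n + 1" "a \<noteq> 0" "cfrac (cf_pform CHAR('a) n qs a) = \<phi>"
      unfolding is_cf_expansion_def by blast
    then obtain f g where "\<phi> = Fract f g" and "is_unit (wronskian f g)"
      using cfrac_cf_pform_eq_Fract by metis
    then show "is_unit (wronskian (rnum \<phi>) (rden \<phi>))"
      by (simp add: is_unit_wronskian_rnum_rden)
  qed
  finally show ?thesis
    by (simp only: cf_pform_def char)
qed

end
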